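(* Let $c\in\mathbb{Z}_{\ge1}$ and $\beta\in[0,1]$. If $\varphi(x)=\beta x+(1-\beta)\min(x,c)$, then \[ \alpha_\varphi=1-(1-\beta)\frac{c^c e^{-c}}{c!}. \]
   Context: $\alpha_\varphi=\inf_{x\in\mathbb{Z}_{\ge1}}\frac{\mathbb{E}_{X\sim\mathrm{Pois}(x)}[\varphi(X)]}{\varphi(x)}$. *)

theory Defs
  imports "HOL-Probability.Probability"
begin

definition alpha_phi :: "(real \<Rightarrow> real) \<Rightarrow> real" where
  "alpha_phi \<phi> = (INF x \<in> {1::nat..}.
      measure_pmf.expectation (poisson_pmf (real x)) (\<lambda>k. \<phi> (real k)) / \<phi> (real x))"

end

theory Submission
  imports Defs
begin

(* Write g(x) = E (c - X)\<^sup>+ for X ~ Pois(x); then E \<phi>(X) = \<beta> x + (1 - \<beta>) (c - g(x)).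
   On [0, \<infinity>) the function g is convex and decreasing, with g(0) = c and g(c) = c p,
   where p = c^c e^(-c) / c! = P(Pois(c) = c). Hence g lies below the chord c - x (1 - p) on [0, c]
   and below c p beyond, i.e. c - g(x) \<ge> min(x, c) (1 - p). This gives
   E \<phi>(X) \<ge> (1 - (1 - \<beta>) p) \<phi>(x) for every x \<ge> 1, with equality at x = c. *)

definition exp_partial_sum :: "nat \<Rightarrow> real \<Rightarrow> real" where
  "exp_partial_sum n t = (\<Sum>k<n. t ^ k / fact k)"

(* E (c - X)\<^sup>+ for X ~ Pois(t): see expectation_poisson_deficit, where the truncated
   subtraction real (c - k) on nat is exactly the positive part. *)
definition poisson_deficit :: "nat \<Rightarrow> real \<Rightarrow> real" where
  "poisson_deficit c t = exp (- t) * (\<Sum>k<c. real (c - k) * t ^ k / fact k)"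

lemma exp_partial_sum_nonneg: "t \<ge> 0 \<Longrightarrow> exp_partial_sum n t \<ge> 0"
  unfolding exp_partial_sum_def by (intro sum_nonneg) auto

lemma has_real_derivative_exp_partial_sum:
  "((\<lambda>t. exp (- t) * exp_partial_sum (Suc n) t) has_real_derivative - exp (- t) * t ^ n / fact n) (at t)"
proof (induction n)
  case 0
  show ?case by (auto simp: exp_partial_sum_def intro!: derivative_eq_intros)
next
  case (Suc n)
  have "((\<lambda>t. exp (- t) * (t ^ Suc n / fact (Suc n))) has_real_derivative
      exp (- t) * t ^ n / fact n - exp (- t) * (t ^ Suc n / fact (Suc n))) (at t)"
    by (auto intro!: derivative_eq_intros simp: field_simps simp del: of_nat_Suc power_Suc)
  from DERIV_add[OF Suc.IH this] show ?case
    by (simp add: exp_partial_sum_def distrib_left)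
qed

lemma poisson_deficit_Suc:
  "poisson_deficit (Suc c) t = poisson_deficit c t + exp (- t) * exp_partial_sum (Suc c) t"
proof -
  have "(\<Sum>k<Suc c. real (Suc c - k) * t ^ k / fact k)
      = (\<Sum>k<Suc c. real (c - k) * t ^ k / fact k) + exp_partial_sum (Suc c) t"
    unfolding exp_partial_sum_def sum.distrib[symmetric]
    by (intro sum.cong) (auto simp: Suc_diff_le add_divide_distrib distrib_right)
  then show ?thesis by (simp add: poisson_deficit_def distrib_left)
qed

lemma has_real_derivative_poisson_deficit:
  "(poisson_deficit c has_real_derivative - exp (- t) * exp_partial_sum c t) (at t)"
proof (induction c)
  case 0
  show ?case by (simp add: poisson_deficit_def exp_partial_sum_def)
next
  case (Suc c)
  have "- exp (- t) * exp_partial_sum c t - exp (- t) * t ^ c / fact c = - exp (- t) * exp_partial_sum (Suc c) t"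
    by (simp add: exp_partial_sum_def algebra_simps)
  with DERIV_add[OF Suc has_real_derivative_exp_partial_sum[of c t]] show ?case
    by (simp add: poisson_deficit_Suc[abs_def])
qed

lemma poisson_deficit_0 [simp]: "poisson_deficit 0 = (\<lambda>_. 0)"
  by (simp add: poisson_deficit_def fun_eq_iff)

lemma poisson_deficit_at_0: "poisson_deficit c 0 = real c"
proof (induction c)
  case (Suc c)
  then show ?case
    by (simp add: poisson_deficit_Suc exp_partial_sum_def sum.lessThan_Suc_shift del: sum.lessThan_Suc)
qed simp

lemma sum_telescope_power_div_fact:
  "(\<Sum>k<n. (t - real k) * t ^ k / fact k) = real n * t ^ n / fact n"
proof (induction n)
  case (Suc n)
  have "real n * t ^ n / fact n + (t - real n) * t ^ n / fact n = real (Suc n) * t ^ Suc n / fact (Suc n)"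
    by (simp add: field_simps del: of_nat_Suc)
  with Suc show ?case by simp
qed simp

lemma poisson_deficit_at_self:
  "poisson_deficit c (real c) = real c * (real c ^ c * exp (- real c) / fact c)"
proof -
  have "(\<Sum>k<c. real (c - k) * real c ^ k / fact k) = (\<Sum>k<c. (real c - real k) * real c ^ k / fact k)"
    by (intro sum.cong) auto
  then show ?thesis
    by (simp add: poisson_deficit_def sum_telescope_power_div_fact)
qed

lemma convex_on_poisson_deficit: "convex_on {0..} (poisson_deficit c)"
proof (cases c)
  case 0
  then show ?thesis by (simp add: convex_on_const)
next
  case (Suc n)
  have second_deriv: "((\<lambda>t. - exp (- t) * exp_partial_sum c t) has_real_derivative exp (- t) * t ^ n / fact n) (at t)" for t
    using DERIV_minus[OF has_real_derivative_exp_partial_sum[of n t]] Suc by simp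
  show ?thesis
    by (rule f''_ge0_imp_convex[OF _ has_real_derivative_poisson_deficit second_deriv]) auto
qed

lemma poisson_deficit_antimono:
  assumes "0 \<le> s" "s \<le> t"
  shows "poisson_deficit c t \<le> poisson_deficit c s"
proof (rule DERIV_nonpos_imp_nonincreasing[OF \<open>s \<le> t\<close>])
  fix x assume "s \<le> x"
  with \<open>0 \<le> s\<close> have "exp_partial_sum c x \<ge> 0"
    by (intro exp_partial_sum_nonneg) simp
  with has_real_derivative_poisson_deficit show "\<exists>y. DERIV (poisson_deficit c) x :> y \<and> y \<le> 0"
    by fastforce
qed

lemma poisson_deficit_le:
  assumes "t \<ge> 0"
  shows "poisson_deficit c t \<le> real c - min t (real c) * (1 - real c ^ c * exp (- real c) / fact c)"
proof (cases "t \<le> real c")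
  case False
  then have "poisson_deficit c t \<le> poisson_deficit c (real c)"
    by (intro poisson_deficit_antimono) auto
  with False show ?thesis
    by (simp add: poisson_deficit_at_self algebra_simps)
next
  case True
  show ?thesis
  proof (cases "c = 0")
    case True
    with \<open>t \<le> real c\<close> assms show ?thesis by simp
  next
    case False
    define u where "u = t / real c"
    have u: "0 \<le> u" "u \<le> 1" and t_eq: "t = u * real c"
      using \<open>t \<le> real c\<close> False assms by (auto simp: u_def)
    have "poisson_deficit c t \<le> (1 - u) * poisson_deficit c 0 + u * poisson_deficit c (real c)"
      using convex_onD[OF convex_on_poisson_deficit u, of 0 "real c"] t_eq by simp
    also have "\<dots> = real c - t * (1 - real c ^ c * exp (- real c) / fact c)"
      using False by (simp add: poisson_deficit_at_0 poisson_deficit_at_self u_def field_simps)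
    finally show ?thesis
      using \<open>t \<le> real c\<close> by simp
  qed
qed

lemma
  fixes p :: "nat pmf" and f :: "nat \<Rightarrow> real"
  assumes nonneg: "\<And>k. f k \<ge> 0" and sums: "(\<lambda>k. pmf p k * f k) sums s"
  shows integrable_pmf_nat_sums: "integrable (measure_pmf p) f"
    and expectation_pmf_nat_sums: "measure_pmf.expectation p f = s"
proof -
  have int: "integrable (count_space UNIV) (\<lambda>k. pmf p k * f k)"
    using sums nonneg unfolding integrable_count_space_nat_iff
    by (simp add: sums_iff abs_mult)
  then show "integrable (measure_pmf p) f"
    unfolding measure_pmf_eq_density by (subst integrable_density) auto
  have "measure_pmf.expectation p f = (\<integral>k. pmf p k * f k \<partial>count_space UNIV)"
    unfolding measure_pmf_eq_density by (subst integral_density) auto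
  also have "\<dots> = s"
    using int sums by (simp add: integral_count_space_nat sums_iff)
  finally show "measure_pmf.expectation p f = s" .
qed

lemma poisson_pmf_mean_sums:
  assumes "x > 0"
  shows "(\<lambda>k. pmf (poisson_pmf x) k * real k) sums x"
proof -
  have "(\<lambda>k. x ^ k / fact k * exp (- x)) sums (exp x * exp (- x))"
    using exp_converges[of x] by (intro sums_mult2) (simp add: divide_inverse mult.commute)
  then have "(\<lambda>k. x * (x ^ k / fact k * exp (- x))) sums (x * 1)"
    unfolding mult_exp_exp by (intro sums_mult) simp
  moreover have "x * (x ^ k / fact k * exp (- x)) = pmf (poisson_pmf x) (Suc k) * real (Suc k)" for k
    using assms by (simp add: field_simps del: of_nat_Suc)
  ultimately have "(\<lambda>k. pmf (poisson_pmf x) (Suc k) * real (Suc k)) sums x"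
    by simp
  then show ?thesis
    unfolding sums_Suc_iff[of "\<lambda>k. pmf (poisson_pmf x) k * real k"] by simp
qed

lemma expectation_poisson_deficit:
  assumes "x > 0"
  shows "measure_pmf.expectation (poisson_pmf x) (\<lambda>k. real (c - k)) = poisson_deficit c x"
proof -
  have "measure_pmf.expectation (poisson_pmf x) (\<lambda>k. real (c - k)) = (\<Sum>k<c. real (c - k) * pmf (poisson_pmf x) k)"
    by (rule integral_measure_pmf_real) auto
  then show ?thesis
    using assms by (simp add: poisson_deficit_def sum_distrib_left mult_ac)
qed

lemma expectation_poisson_blend:
  assumes "x > 0"
  shows "measure_pmf.expectation (poisson_pmf x) (\<lambda>k. \<beta> * real k + (1 - \<beta>) * min (real k) (real c))
    = \<beta> * x + (1 - \<beta>) * (real c - poisson_deficit c x)"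
proof -
  have "min (real k) (real c) = real c - real (c - k)" for k
    by (simp add: min_def)
  moreover have "integrable (measure_pmf (poisson_pmf x)) real"
    by (rule integrable_pmf_nat_sums[OF _ poisson_pmf_mean_sums[OF assms]]) simp
  moreover have "integrable (measure_pmf (poisson_pmf x)) (\<lambda>k. real (c - k))"
    by (rule measure_pmf.integrable_const_bound[where B = "real c"]) auto
  ultimately show ?thesis
    using expectation_pmf_nat_sums[OF _ poisson_pmf_mean_sums[OF assms]]
      expectation_poisson_deficit[OF assms]
    by (simp add: right_diff_distrib)
qed

lemma blend_ratio_ge:
  fixes \<beta> p m y s :: real
  assumes "0 \<le> \<beta>" "\<beta> \<le> 1" "0 \<le> p" "0 < m" "m \<le> y" "m * (1 - p) \<le> s"
  shows "1 - (1 - \<beta>) * p \<le> (\<beta> * y + (1 - \<beta>) * s) / (\<beta> * y + (1 - \<beta>) * m)"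
proof -
  define D where "D = \<beta> * y + (1 - \<beta>) * m"
  have "m \<le> D"
    using assms mult_left_mono[of m y \<beta>] by (simp add: D_def algebra_simps)
  then have "(1 - \<beta>) * (p * m) \<le> (1 - \<beta>) * (p * D)"
    using assms by (intro mult_left_mono) auto
  moreover have "(1 - \<beta>) * (m * (1 - p)) \<le> (1 - \<beta>) * s"
    using assms by (intro mult_left_mono) auto
  ultimately have "(1 - (1 - \<beta>) * p) * D \<le> \<beta> * y + (1 - \<beta>) * s"
    by (simp add: D_def algebra_simps)
  with \<open>m \<le> D\<close> \<open>0 < m\<close> show ?thesis
    by (simp add: D_def pos_le_divide_eq)
qed

theorem mainTheorem11:
  fixes c :: nat and \<beta> :: real and \<phi> :: "real \<Rightarrow> real"
  assumes "c \<ge> 1"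
    and "0 \<le> \<beta>" and "\<beta> \<le> 1"
    and "\<And>x. \<phi> x = \<beta> * x + (1 - \<beta>) * min x (real c)"
  shows "alpha_phi \<phi> = 1 - (1 - \<beta>) * (real c ^ c * exp (- real c) / fact c)"
proof -
  define p where "p = real c ^ c * exp (- real c) / fact c"
  define ratio where
    "ratio n = measure_pmf.expectation (poisson_pmf (real n)) (\<lambda>k. \<phi> (real k)) / \<phi> (real n)" for n :: nat
  have \<phi>_eq: "\<phi> = (\<lambda>x. \<beta> * x + (1 - \<beta>) * min x (real c))"
    using assms(4) by auto
  have ratio_eq: "ratio n = (\<beta> * real n + (1 - \<beta>) * (real c - poisson_deficit c (real n)))
      / (\<beta> * real n + (1 - \<beta>) * min (real n) (real c))" if "n \<ge> 1" for n
    using expectation_poisson_blend[of "real n" \<beta> c] that by (simp add: ratio_def \<phi>_eq)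
  have "1 - (1 - \<beta>) * p \<le> ratio n" if "n \<ge> 1" for n
    unfolding ratio_eq[OF that] using assms that poisson_deficit_le[of "real n" c]
    by (intro blend_ratio_ge) (auto simp: p_def algebra_simps)
  moreover have "ratio c = 1 - (1 - \<beta>) * p"
    using assms(1) by (simp add: ratio_eq poisson_deficit_at_self p_def field_simps)
  ultimately show ?thesis
    unfolding alpha_phi_def ratio_def[symmetric] p_def[symmetric]
    by (intro cInf_eq_minimum) (use assms(1) in \<open>auto intro: rev_image_eqI\<close>)
qed

end
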